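(* Let $k$ be a positive integer and let $K\subset\mathbb{R}^d$ be a centrally symmetric convex body. Let $\mathcal{K}=\{o_i+\tau_iK: i=1,\dots,n\}$ with $o_i\in\mathbb{R}^d$ and $\tau_1,\dots,\tau_n>0$. Suppose every hyperplane in $\mathbb{R}^d$ intersects the interiors of at most $k$ members of $\mathcal{K}$. Then some translate of $\frac1k\left(\sum_{i=1}^n\tau_i\right)K$ is contained in $\operatorname{conv}\bigcup\mathcal{K}$.
   Context: A convex body is a compact convex set with nonempty interior. *)

theory Defs
  imports "HOL-Analysis.Analysis"
begin

definition convex_body :: "'a::euclidean_space set \<Rightarrow> bool" where
  "convex_body K \<longleftrightarrow> compact K \<and> convex K \<and> interior K \<noteq> {}"

definition centrally_symmetric :: "'a::euclidean_space set \<Rightarrow> bool" where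
  "centrally_symmetric K \<longleftrightarrow> (\<exists>c. \<forall>x. x \<in> K \<longleftrightarrow> 2 *\<^sub>R c - x \<in> K)"

definition hyperplane :: "'a::euclidean_space set \<Rightarrow> bool" where
  "hyperplane H \<longleftrightarrow> (\<exists>a b. a \<noteq> 0 \<and> H = {x. a \<bullet> x = b})"

end

theory Submission
  imports Defs
begin

text \<open>
  Project onto a direction \<open>u\<close>. If \<open>h\<close> is the half-width of \<open>K\<close> in direction \<open>u\<close>, the interior of
  \<open>o\<^sub>i + \<tau>\<^sub>i K\<close> projects onto an open interval of half-length \<open>\<tau>\<^sub>i h\<close>, and the hyperplane condition
  says that no point lies in more than \<open>k\<close> of these intervals. For intervals of half-lengths
  \<open>s\<^sub>i\<close> and depth at most \<open>k\<close>, integrating the depth function against \<open>1\<close> and against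
  \<open>M - x\<close> (\<open>M\<close> the rightmost endpoint) and comparing with the extremal density
  \<open>k\<close> on \<open>(M - 2\<Sigma>s\<^sub>i/k, M]\<close> shows that \<open>M\<close> exceeds the \<open>s\<close>-weighted mean of the midpoints by at
  least \<open>\<Sigma>s\<^sub>i/k\<close>. Hence the copy of \<open>(\<Sigma>\<tau>\<^sub>i/k) K\<close> centred at the \<open>\<tau>\<close>-weighted mean of the
  centres of the homothets reaches no further than the convex hull in any direction, and
  separation puts it inside.
\<close>

lemma has_integral_affine_restrict:
  fixes \<alpha> \<beta> p q lo hi :: real
  assumes "p \<le> q" "lo \<le> p" "q \<le> hi" "{p<..<q} \<subseteq> A" "A \<subseteq> {p..q}"
  shows "((\<lambda>x. if x \<in> A then \<alpha> + \<beta> * x else 0) has_integral \<alpha> * (q - p) + \<beta> * (q\<^sup>2 - p\<^sup>2) / 2) {lo..hi}"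
proof -
  have "((\<lambda>x. \<alpha> + \<beta> * x) has_integral (\<alpha> * q + \<beta> * q\<^sup>2 / 2) - (\<alpha> * p + \<beta> * p\<^sup>2 / 2)) {p..q}"
    using \<open>p \<le> q\<close>
    by (intro fundamental_theorem_of_calculus)
       (auto intro!: derivative_eq_intros simp flip: has_real_derivative_iff_has_vector_derivative)
  then have "((\<lambda>x. \<alpha> + \<beta> * x) has_integral \<alpha> * (q - p) + \<beta> * (q\<^sup>2 - p\<^sup>2) / 2) (cbox p q)"
    by (simp add: algebra_simps diff_divide_distrib)
  then have closed: "((\<lambda>x. if x \<in> {p..q} then \<alpha> + \<beta> * x else 0) has_integral \<alpha> * (q - p) + \<beta> * (q\<^sup>2 - p\<^sup>2) / 2) {lo..hi}"
    using has_integral_restrict_closed_subinterval[of _ _ p q lo hi] assms(2,3) by auto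
  have "x \<in> A \<longleftrightarrow> x \<in> {p..q}" if "x \<notin> {p, q}" for x
  proof
    assume "x \<in> {p..q}"
    with that have "x \<in> {p<..<q}" by auto
    then show "x \<in> A" using assms(4) by blast
  qed (use assms(5) in blast)
  then show ?thesis
    by (intro has_integral_spike_finite[OF _ _ closed, of "{p, q}"]) auto
qed

text \<open>Bathtub principle: the moment about \<open>M\<close> is smallest when all the mass sits on \<open>(M - L, M]\<close>.\<close>

lemma moment_lower_bound:
  fixes f :: "real \<Rightarrow> real" and k L M lo J :: real
  assumes mass: "(f has_integral k * L) {lo..M}"
    and moment: "((\<lambda>x. (M - x) * f x) has_integral J) {lo..M}"
    and bounds: "\<And>x. x \<in> {lo..M} \<Longrightarrow> 0 \<le> f x \<and> f x \<le> k"
    and "0 \<le> L" "lo \<le> M - L"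
  shows "k * L\<^sup>2 / 2 \<le> J"
proof -
  have window: "{M - L<..<M} \<subseteq> {M - L<..M}" "{M - L<..M} \<subseteq> {M - L..M}"
    by auto
  define g where "g x = (if x \<in> {M - L<..M} then k else 0)" for x
  have "g = (\<lambda>x. if x \<in> {M - L<..M} then k + 0 * x else 0)"
    by (simp add: g_def fun_eq_iff)
  then have g_mass: "(g has_integral k * L) {lo..M}"
    using has_integral_affine_restrict[of "M - L" M lo M "{M - L<..M}" k 0] window assms(4,5) by simp
  have moment_eq: "k * M * (M - (M - L)) + - k * (M\<^sup>2 - (M - L)\<^sup>2) / 2 = k * L\<^sup>2 / 2"
    by (simp add: power2_eq_square field_simps)
  have "(\<lambda>x. (M - x) * g x) = (\<lambda>x. if x \<in> {M - L<..M} then k * M + (- k) * x else 0)"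
    by (simp add: g_def fun_eq_iff algebra_simps)
  then have g_moment: "((\<lambda>x. (M - x) * g x) has_integral k * L\<^sup>2 / 2) {lo..M}"
    using has_integral_affine_restrict[of "M - L" M lo M "{M - L<..M}" "k * M" "- k", unfolded moment_eq]
      window assms(4,5)
    by simp
  have pointwise: "L * (f x - g x) \<le> (M - x) * f x - (M - x) * g x" if "x \<in> {lo..M}" for x
  proof (cases "x \<in> {M - L<..M}")
    case True
    then have "(L - (M - x)) * (f x - k) \<le> 0"
      using bounds[OF that] by (intro mult_nonneg_nonpos) auto
    with True show ?thesis by (simp add: g_def algebra_simps)
  next
    case False
    then have "g x = 0" by (auto simp: g_def)
    moreover from False that have "L * f x \<le> (M - x) * f x"
      using bounds[OF that] by (intro mult_right_mono) auto
    ultimately show ?thesis by simp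
  qed
  have "L * (k * L - k * L) \<le> J - k * L\<^sup>2 / 2"
    using has_integral_le[OF has_integral_mult_right[OF has_integral_diff[OF mass g_mass], of L]
        has_integral_diff[OF moment g_moment] pointwise]
    by (simp add: algebra_simps)
  then show ?thesis by simp
qed

lemma bounded_depth_intervals_max_right_end:
  fixes a s :: "'i \<Rightarrow> real" and I :: "'i set" and k :: nat
  assumes I: "finite I" "I \<noteq> {}" and pos: "\<And>i. i \<in> I \<Longrightarrow> 0 < s i" and "0 < k"
    and depth: "\<And>x. card {i \<in> I. a i - s i < x \<and> x < a i + s i} \<le> k"
  shows "(\<Sum>i\<in>I. s i * a i) / (\<Sum>i\<in>I. s i) + (\<Sum>i\<in>I. s i) / k \<le> Max ((\<lambda>i. a i + s i) ` I)"
proof -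
  define M where "M = Max ((\<lambda>i. a i + s i) ` I)"
  define S where "S = (\<Sum>i\<in>I. s i)"
  define L where "L = 2 * S / k"
  define lo where "lo = min (Min ((\<lambda>i. a i - s i) ` I)) (M - L)"
  define F where "F x = (\<Sum>i\<in>I. if x \<in> {a i - s i<..<a i + s i} then 1 else 0 :: real)" for x
  have "0 < S" unfolding S_def using I pos by (intro sum_pos) auto
  then have "0 \<le> L" by (simp add: L_def)
  have right_end: "a i + s i \<le> M" and left_end: "lo \<le> a i - s i" if "i \<in> I" for i
    using that I by (auto simp: M_def lo_def intro!: Max_ge min.coboundedI1 Min_le)
  have "((\<lambda>x. \<Sum>i\<in>I. if x \<in> {a i - s i<..<a i + s i} then 1 + 0 * x else 0) has_integral
      (\<Sum>i\<in>I. 1 * ((a i + s i) - (a i - s i)) + 0 * ((a i + s i)\<^sup>2 - (a i - s i)\<^sup>2) / 2)) {lo..M}"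
    using pos left_end right_end
    by (intro has_integral_sum I has_integral_affine_restrict) (auto simp: less_imp_le)
  moreover have "(\<lambda>x. \<Sum>i\<in>I. if x \<in> {a i - s i<..<a i + s i} then 1 + 0 * x else 0) = F"
    by (simp add: F_def fun_eq_iff cong: if_cong)
  moreover have "real k * L = 2 * S"
    using \<open>0 < k\<close> by (simp add: L_def)
  ultimately have mass: "(F has_integral real k * L) {lo..M}"
    by (simp add: S_def sum_distrib_left)
  have "((\<lambda>x. \<Sum>i\<in>I. if x \<in> {a i - s i<..<a i + s i} then M + (- 1) * x else 0) has_integral
      (\<Sum>i\<in>I. M * ((a i + s i) - (a i - s i)) + (- 1) * ((a i + s i)\<^sup>2 - (a i - s i)\<^sup>2) / 2)) {lo..M}"
    using pos left_end right_end
    by (intro has_integral_sum I has_integral_affine_restrict) (auto simp: less_imp_le)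
  moreover have "(\<lambda>x. \<Sum>i\<in>I. if x \<in> {a i - s i<..<a i + s i} then M + (- 1) * x else 0) =
      (\<lambda>x. (M - x) * F x)"
    by (simp add: F_def fun_eq_iff sum_distrib_left if_distrib cong: if_cong)
  ultimately have moment: "((\<lambda>x. (M - x) * F x) has_integral 2 * (M * S - (\<Sum>i\<in>I. s i * a i))) {lo..M}"
    by (simp add: S_def sum_distrib_left sum_subtractf power2_eq_square algebra_simps)
  have "F x \<le> k" for x
  proof -
    have "F x = real (card {i \<in> I. a i - s i < x \<and> x < a i + s i})"
      using I by (simp add: F_def sum.If_cases Int_def)
    then show ?thesis using depth[of x] by simp
  qed
  moreover have "0 \<le> F x" for x
    by (simp add: F_def sum_nonneg)
  ultimately have "real k * L\<^sup>2 / 2 \<le> 2 * (M * S - (\<Sum>i\<in>I. s i * a i))"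
    using moment_lower_bound[OF mass moment] \<open>0 \<le> L\<close> by (simp add: lo_def)
  then have "(\<Sum>i\<in>I. s i * a i) + S\<^sup>2 / k \<le> M * S"
    using \<open>0 < k\<close> by (simp add: L_def power2_eq_square field_simps)
  then show ?thesis
    using \<open>0 < S\<close> by (simp add: M_def[symmetric] S_def[symmetric] field_simps power2_eq_square)
qed

abbreviation homothet :: "'a::real_vector \<Rightarrow> real \<Rightarrow> 'a set \<Rightarrow> 'a set" where
  "homothet c t K \<equiv> (\<lambda>x. c + x) ` ((\<lambda>x. t *\<^sub>R x) ` K)"

lemma interior_homothet:
  fixes K :: "'a::euclidean_space set"
  assumes "t \<noteq> 0"
  shows "interior (homothet c t K) = homothet c t (interior K)"
  using assms by (simp add: interior_translation interior_injective_linear_image inj_on_def)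

lemma centre_in_interior_if_symmetric:
  fixes K :: "'a::euclidean_space set"
  assumes "convex K" "interior K \<noteq> {}" and sym: "\<And>x. x \<in> K \<longleftrightarrow> 2 *\<^sub>R c - x \<in> K"
  shows "c \<in> interior K"
proof -
  have "K = (\<lambda>x. 2 *\<^sub>R c + x) ` uminus ` K"
    using sym by (force simp: image_image intro: image_eqI[where x = "2 *\<^sub>R c - _"])
  then have reflect: "2 *\<^sub>R c - z \<in> interior K" if "z \<in> interior K" for z
    using that by (metis interior_translation interior_negations image_eqI diff_conv_add_uminus)
  obtain z where z: "z \<in> interior K"
    using assms(2) by blast
  have "(1/2) *\<^sub>R z + (1/2) *\<^sub>R (2 *\<^sub>R c - z) \<in> interior K"
    using convex_interior[OF assms(1)] z reflect[OF z] by (intro convexD) auto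
  then show ?thesis
    by (simp add: algebra_simps)
qed

lemma symmetric_chord_in_interior:
  fixes K :: "'a::euclidean_space set"
  assumes "convex K" "c \<in> interior K" "y \<in> K" "2 *\<^sub>R c - y \<in> K" "\<bar>t\<bar> < 1"
  shows "c + t *\<^sub>R (y - c) \<in> interior K"
proof (cases "0 \<le> t")
  case True
  then have "y - (1 - t) *\<^sub>R (y - c) \<in> interior K"
    using assms closure_subset by (intro mem_interior_closure_convex_shrink) auto
  then show ?thesis
    by (simp add: algebra_simps)
next
  case False
  then have "(2 *\<^sub>R c - y) - (1 + t) *\<^sub>R ((2 *\<^sub>R c - y) - c) \<in> interior K"
    using assms closure_subset by (intro mem_interior_closure_convex_shrink) auto
  then show ?thesis
    by (simp add: algebra_simps scaleR_2)
qed

lemma interior_point_not_inner_maximal: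
  fixes K :: "'a::euclidean_space set"
  assumes "c \<in> interior K" "u \<noteq> 0"
  obtains y where "y \<in> K" "u \<bullet> c < u \<bullet> y"
proof -
  obtain e where "0 < e" "ball c e \<subseteq> K"
    using assms(1) by (auto simp: mem_interior)
  moreover define y where "y = c + (e / 2 / norm u) *\<^sub>R u"
  ultimately have "y \<in> K"
    using assms(2) by (auto simp: y_def dist_norm)
  moreover have "u \<bullet> y = u \<bullet> c + e / 2 * norm u"
    using assms(2) by (simp add: y_def inner_add_right power2_norm_eq_inner[symmetric] power2_eq_square)
  ultimately show ?thesis
    using that \<open>0 < e\<close> assms(2) by simp
qed

text \<open>When \<open>y\<close> maximises \<open>u\<close> on \<open>K\<close>, the \<open>i\<close>-th interval is the projection onto \<open>u\<close> of the interior
  of the \<open>i\<close>-th homothet.\<close>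

lemma homothet_projection_depth:
  fixes K :: "'a::euclidean_space set" and c :: "'i \<Rightarrow> 'a" and I :: "'i set"
  assumes "finite I" and pos: "\<And>i. i \<in> I \<Longrightarrow> 0 < \<tau> i"
    and "convex K" "c0 \<in> interior K" and sym: "\<And>x. x \<in> K \<longleftrightarrow> 2 *\<^sub>R c0 - x \<in> K"
    and "y \<in> K" "u \<noteq> 0"
    and hyp: "\<And>H. hyperplane H \<Longrightarrow> card {i \<in> I. H \<inter> interior (homothet (c i) (\<tau> i) K) \<noteq> {}} \<le> k"
  shows "card {i \<in> I. u \<bullet> (c i + \<tau> i *\<^sub>R c0) - \<tau> i * (u \<bullet> (y - c0)) < x
                  \<and> x < u \<bullet> (c i + \<tau> i *\<^sub>R c0) + \<tau> i * (u \<bullet> (y - c0))} \<le> k"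
proof -
  define H where "H = {z. u \<bullet> z = x}"
  have meets: "H \<inter> interior (homothet (c i) (\<tau> i) K) \<noteq> {}"
    if "i \<in> I" and between: "u \<bullet> (c i + \<tau> i *\<^sub>R c0) - \<tau> i * (u \<bullet> (y - c0)) < x"
      "x < u \<bullet> (c i + \<tau> i *\<^sub>R c0) + \<tau> i * (u \<bullet> (y - c0))" for i
  proof -
    define r where "r = \<tau> i * (u \<bullet> (y - c0))"
    define \<theta> where "\<theta> = (x - u \<bullet> (c i + \<tau> i *\<^sub>R c0)) / r"
    have "0 < r" "0 < \<tau> i"
      using between pos[OF \<open>i \<in> I\<close>] by (auto simp: r_def)
    then have "\<bar>\<theta>\<bar> < 1"
      using between by (auto simp: \<theta>_def r_def abs_less_iff divide_less_eq less_divide_eq)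
    then have "c0 + \<theta> *\<^sub>R (y - c0) \<in> interior K"
      using assms(3,4,6) sym by (intro symmetric_chord_in_interior) auto
    then have "c i + \<tau> i *\<^sub>R (c0 + \<theta> *\<^sub>R (y - c0)) \<in> interior (homothet (c i) (\<tau> i) K)"
      using \<open>0 < \<tau> i\<close> by (simp add: interior_homothet)
    moreover have "u \<bullet> (c i + \<tau> i *\<^sub>R (c0 + \<theta> *\<^sub>R (y - c0))) = u \<bullet> (c i + \<tau> i *\<^sub>R c0) + \<theta> * r"
      by (simp add: r_def inner_add_right inner_diff_right algebra_simps)
    moreover have "\<theta> * r = x - u \<bullet> (c i + \<tau> i *\<^sub>R c0)"
      using \<open>0 < r\<close> by (simp add: \<theta>_def)
    ultimately show ?thesis
      by (auto simp: H_def)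
  qed
  have "hyperplane H"
    using \<open>u \<noteq> 0\<close> by (auto simp: hyperplane_def H_def)
  then show ?thesis
    using meets \<open>finite I\<close> by (intro order.trans[OF card_mono hyp]) auto
qed

lemma homothet_family_support_bound:
  fixes K :: "'a::euclidean_space set" and c :: "'i \<Rightarrow> 'a" and I :: "'i set" and k :: nat
  assumes I: "finite I" "I \<noteq> {}" and pos: "\<And>i. i \<in> I \<Longrightarrow> 0 < \<tau> i" and "0 < k"
    and K: "compact K" "convex K" "c0 \<in> interior K" and sym: "\<And>x. x \<in> K \<longleftrightarrow> 2 *\<^sub>R c0 - x \<in> K"
    and hyp: "\<And>H. hyperplane H \<Longrightarrow> card {i \<in> I. H \<inter> interior (homothet (c i) (\<tau> i) K) \<noteq> {}} \<le> k"
    and "x \<in> K"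
  shows "\<exists>j\<in>I. \<exists>y\<in>K. u \<bullet> ((\<Sum>i\<in>I. \<tau> i *\<^sub>R (c i + \<tau> i *\<^sub>R c0)) /\<^sub>R (\<Sum>i\<in>I. \<tau> i)
                               + ((\<Sum>i\<in>I. \<tau> i) / k) *\<^sub>R (x - c0))
                       \<le> u \<bullet> (c j + \<tau> j *\<^sub>R y)"
proof (cases "u = 0")
  case True
  then show ?thesis
    using I(2) \<open>x \<in> K\<close> by auto
next
  case False
  define S where "S = (\<Sum>i\<in>I. \<tau> i)"
  have "continuous_on K (\<lambda>y. u \<bullet> y)"
    by (intro continuous_intros)
  then obtain ys where ys: "ys \<in> K" and ys_max: "\<And>y. y \<in> K \<Longrightarrow> u \<bullet> y \<le> u \<bullet> ys"
    using continuous_attains_sup[OF K(1)] \<open>x \<in> K\<close> by blast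
  define h where "h = u \<bullet> (ys - c0)"
  define a where "a i = u \<bullet> (c i + \<tau> i *\<^sub>R c0)" for i
  obtain y where "y \<in> K" "u \<bullet> c0 < u \<bullet> y"
    using interior_point_not_inner_maximal[OF K(3) False] .
  then have "0 < h"
    using ys_max by (fastforce simp: h_def inner_diff_right)
  have "0 < S"
    using I pos by (simp add: S_def sum_pos)
  have depth: "card {i \<in> I. a i - \<tau> i * h < t \<and> t < a i + \<tau> i * h} \<le> k" for t
    unfolding a_def h_def using I(1) pos K(2,3) sym ys False hyp by (rule homothet_projection_depth)
  have "Max ((\<lambda>i. a i + \<tau> i * h) ` I) \<in> (\<lambda>i. a i + \<tau> i * h) ` I"
    using I by (intro Max_in) auto
  then obtain j where "j \<in> I" and j_max: "Max ((\<lambda>i. a i + \<tau> i * h) ` I) = a j + \<tau> j * h"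
    by auto
  have "u \<bullet> ((\<Sum>i\<in>I. \<tau> i *\<^sub>R (c i + \<tau> i *\<^sub>R c0)) /\<^sub>R S + (S / k) *\<^sub>R (x - c0))
      = (\<Sum>i\<in>I. \<tau> i * a i) / S + S / k * (u \<bullet> (x - c0))"
    by (simp add: a_def inner_add_right inner_sum_right divide_inverse_commute)
  also have "\<dots> \<le> (\<Sum>i\<in>I. \<tau> i * a i) / S + S / k * h"
    using ys_max[OF \<open>x \<in> K\<close>] \<open>0 < S\<close> by (intro add_left_mono mult_left_mono) (auto simp: h_def inner_diff_right)
  also have "\<dots> = (\<Sum>i\<in>I. \<tau> i * h * a i) / (\<Sum>i\<in>I. \<tau> i * h) + (\<Sum>i\<in>I. \<tau> i * h) / k"
    using \<open>0 < h\<close> by (simp add: S_def mult.commute mult.left_commute flip: sum_distrib_left)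
  also have "\<dots> \<le> Max ((\<lambda>i. a i + \<tau> i * h) ` I)"
    using I pos \<open>0 < h\<close> \<open>0 < k\<close> depth by (intro bounded_depth_intervals_max_right_end) auto
  also have "\<dots> = u \<bullet> (c j + \<tau> j *\<^sub>R ys)"
    unfolding j_max by (simp add: a_def h_def inner_add_right inner_diff_right algebra_simps)
  finally show ?thesis
    using ys \<open>j \<in> I\<close> by (auto simp: S_def)
qed

lemma mem_closed_convex_if_inner_le:
  fixes C :: "'a::euclidean_space set"
  assumes "closed C" "convex C" and bounded_by_C: "\<And>u. \<exists>y\<in>C. u \<bullet> q \<le> u \<bullet> y"
  shows "q \<in> C"
proof (rule ccontr)
  assume "q \<notin> C"
  then obtain a b where "a \<bullet> q < b" "\<forall>y\<in>C. b < a \<bullet> y"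
    using separating_hyperplane_closed_point assms(1,2) by blast
  with bounded_by_C[of "- a"] show False
    by force
qed

lemma convex_hull_homothets_contains_homothet:
  fixes K :: "'a::euclidean_space set" and c :: "'i \<Rightarrow> 'a" and I :: "'i set" and k :: nat
  assumes I: "finite I" "I \<noteq> {}" and pos: "\<And>i. i \<in> I \<Longrightarrow> 0 < \<tau> i" and "0 < k"
    and K: "compact K" "convex K" "c0 \<in> interior K" and sym: "\<And>x. x \<in> K \<longleftrightarrow> 2 *\<^sub>R c0 - x \<in> K"
    and hyp: "\<And>H. hyperplane H \<Longrightarrow> card {i \<in> I. H \<inter> interior (homothet (c i) (\<tau> i) K) \<noteq> {}} \<le> k"
  shows "\<exists>t. homothet t ((\<Sum>i\<in>I. \<tau> i) / k) K \<subseteq> convex hull (\<Union>i\<in>I. homothet (c i) (\<tau> i) K)"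
proof -
  define S where "S = (\<Sum>i\<in>I. \<tau> i)"
  define p where "p = (\<Sum>i\<in>I. \<tau> i *\<^sub>R (c i + \<tau> i *\<^sub>R c0)) /\<^sub>R S"
  let ?C = "convex hull (\<Union>i\<in>I. homothet (c i) (\<tau> i) K)"
  have in_hull: "p + (S / k) *\<^sub>R (x - c0) \<in> ?C" if "x \<in> K" for x
  proof (rule mem_closed_convex_if_inner_le)
    show "closed ?C"
      using K(1) I(1) by (intro compact_imp_closed compact_convex_hull compact_UN compact_translation
          compact_scaling)
    fix u
    obtain j y where "j \<in> I" "y \<in> K" "u \<bullet> (p + (S / k) *\<^sub>R (x - c0)) \<le> u \<bullet> (c j + \<tau> j *\<^sub>R y)"
      using homothet_family_support_bound[OF assms \<open>x \<in> K\<close>, where u = u]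
      unfolding p_def S_def by blast
    then show "\<exists>z\<in>?C. u \<bullet> (p + (S / k) *\<^sub>R (x - c0)) \<le> u \<bullet> z"
      by (intro bexI[OF _ hull_subset[THEN subsetD]]) blast+
  qed simp
  show ?thesis
  proof (intro exI[of _ "p - (S / k) *\<^sub>R c0"] subsetI)
    fix z assume "z \<in> homothet (p - (S / k) *\<^sub>R c0) ((\<Sum>i\<in>I. \<tau> i) / k) K"
    then obtain x where "x \<in> K" "z = p + (S / k) *\<^sub>R (x - c0)"
      by (auto simp: S_def algebra_simps)
    then show "z \<in> ?C"
      using in_hull by blast
  qed
qed

theorem theorem9:
  fixes K :: "'a::euclidean_space set"
    and k n :: nat and c :: "nat \<Rightarrow> 'a" and \<tau> :: "nat \<Rightarrow> real"
  assumes "k > 0" and "n \<ge> 1"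
    and "convex_body K" and "centrally_symmetric K"
    and "\<And>i. i \<in> {1..n} \<Longrightarrow> \<tau> i > 0"
    and "\<And>H. hyperplane H \<Longrightarrow>
           card {i \<in> {1..n}. H \<inter> interior ((\<lambda>x. c i + x) ` ((\<lambda>x. \<tau> i *\<^sub>R x) ` K)) \<noteq> {}} \<le> k"
  shows "\<exists>t. (\<lambda>x. t + x) ` ((\<lambda>x. ((\<Sum>i=1..n. \<tau> i) / real k) *\<^sub>R x) ` K)
           \<subseteq> convex hull (\<Union>i\<in>{1..n}. (\<lambda>x. c i + x) ` ((\<lambda>x. \<tau> i *\<^sub>R x) ` K))"
proof -
  have K: "compact K" "convex K" "interior K \<noteq> {}"
    using assms(3) by (auto simp: convex_body_def)
  obtain c0 where sym: "\<And>x. x \<in> K \<longleftrightarrow> 2 *\<^sub>R c0 - x \<in> K"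
    using assms(4) by (auto simp: centrally_symmetric_def)
  have "c0 \<in> interior K"
    using K(2,3) sym by (rule centre_in_interior_if_symmetric)
  moreover have "{1..n} \<noteq> {}"
    using assms(2) by simp
  ultimately show ?thesis
    using convex_hull_homothets_contains_homothet[OF finite_atLeastAtMost _ assms(5,1) K(1,2) _ sym assms(6)]
    by blast
qed

end
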